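(* Let $\mathcal{M}=(S,E,T)$ be a trivially parametric Markov chain satisfying the standing assumptions below. Then there exists a finest valuation for $\mathcal{M}$, i.e. a graph-preserving valuation $\mathsf{val}$ such that for all $u,v\in S$, $P_{\mathsf{val}}(u)=P_{\mathsf{val}}(v)$ if and only if $u\sim v$.
   Context: A trivially parametric Markov chain $\mathcal{M}=(S,E,T)$ consists of a finite set of states $S$, targets $T=\{\mathit{fin},\mathit{fail}\}$ with no outgoing edges, and edges $E\subseteq(S\setminus T)\times S$. A graph-preserving valuation assigns to each non-target $s$ a full-support probability distribution on its successor set $sE$; $P_{\mathsf{val}}(s)$ is the probability of reaching $\mathit{fin}$ from $s$ in the resulting Markov chain. $u\sim v$ iff $P_{\mathsf{val}}(u)=P_{\mathsf{val}}(v)$ for every graph-preserving valuation. Standing assumptions: the equivalence classes of $\mathit{fin}$ and $\mathit{fail}$ are $\{\mathit{fin}\}$ and $\{\mathit{fail}\}$; no state has a self-loop; every non-target state has exactly two successors. *)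

theory Defs
  imports Complex_Main
begin

text \<open>A valuation is a function val :: 's => 's => real, val s t being the probability
  of the transition s -> t.\<close>

definition succs :: "('s \<times> 's) set \<Rightarrow> 's \<Rightarrow> 's set" where
  "succs E s = {t. (s, t) \<in> E}"

definition graph_preserving ::
  "'s set \<Rightarrow> ('s \<times> 's) set \<Rightarrow> 's set \<Rightarrow> ('s \<Rightarrow> 's \<Rightarrow> real) \<Rightarrow> bool" where
  "graph_preserving S E T val \<longleftrightarrow>
     (\<forall>s \<in> S - T. (\<forall>t \<in> succs E s. val s t > 0) \<and> (\<Sum>t \<in> succs E s. val s t) = 1)"

fun reach_within ::
  "('s \<times> 's) set \<Rightarrow> 's set \<Rightarrow> 's \<Rightarrow> ('s \<Rightarrow> 's \<Rightarrow> real) \<Rightarrow> nat \<Rightarrow> 's \<Rightarrow> real" where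
  "reach_within E T fin val 0 s = (if s = fin then 1 else 0)"
| "reach_within E T fin val (Suc n) s =
     (if s \<in> T then (if s = fin then 1 else 0)
      else (\<Sum>t \<in> succs E s. val s t * reach_within E T fin val n t))"

text \<open>P_val(s): probability of (eventually) reaching fin from s, the limit of the
  (monotonically increasing, bounded) bounded-horizon reachability probabilities.\<close>
definition reach_prob ::
  "('s \<times> 's) set \<Rightarrow> 's set \<Rightarrow> 's \<Rightarrow> ('s \<Rightarrow> 's \<Rightarrow> real) \<Rightarrow> 's \<Rightarrow> real" where
  "reach_prob E T fin val s = lim (\<lambda>n. reach_within E T fin val n s)"

definition equiv_states ::
  "'s set \<Rightarrow> ('s \<times> 's) set \<Rightarrow> 's \<Rightarrow> 's \<Rightarrow> 's \<Rightarrow> 's \<Rightarrow> bool" where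
  "equiv_states S E fin fail u v \<longleftrightarrow>
     (\<forall>val. graph_preserving S E {fin, fail} val \<longrightarrow>
        reach_prob E {fin, fail} fin val u = reach_prob E {fin, fail} fin val v)"

end

theory Submission
  imports Defs "Jordan_Normal_Form.Determinant"
begin

text \<open>Fix two graph-preserving valuations a and b and consider the segment
  (1 - t) a + t b, t \<in> [0, 1]. On the non-target states that can reach fin, the
  reachability probabilities are the unique solution of a linear system with matrix
  I - P(t), whose entries are affine in t; uniqueness is a maximum principle, since fin is
  reachable from each of these states. By Cramer's rule the reachability probability of s
  at parameter t is c_s(t) / D(t) for polynomials c_s and D with D nonzero on [0, 1]. Hence
  two states separated at some point of the segment are separated at all but finitely many
  points, and finitely many separations can be achieved simultaneously. Adding the
  non-equivalent pairs one at a time to a valuation yields a finest one.\<close>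

definition poly_function :: "(real \<Rightarrow> real) \<Rightarrow> bool" where
  "poly_function f \<longleftrightarrow> (\<exists>p. \<forall>t. f t = poly p t)"

lemma poly_function_const [simp]: "poly_function (\<lambda>t. c)"
  unfolding poly_function_def by (rule exI[of _ "[:c:]"]) simp

lemma poly_function_id [simp]: "poly_function (\<lambda>t. t)"
  unfolding poly_function_def by (rule exI[of _ "[:0, 1:]"]) simp

lemma poly_function_add: "poly_function f \<Longrightarrow> poly_function g \<Longrightarrow> poly_function (\<lambda>t. f t + g t)"
  unfolding poly_function_def by (metis poly_add)

lemma poly_function_diff: "poly_function f \<Longrightarrow> poly_function g \<Longrightarrow> poly_function (\<lambda>t. f t - g t)"
  unfolding poly_function_def by (metis poly_diff)

lemma poly_function_mult: "poly_function f \<Longrightarrow> poly_function g \<Longrightarrow> poly_function (\<lambda>t. f t * g t)"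
  unfolding poly_function_def by (metis poly_mult)

lemma poly_function_sum:
  "(\<And>x. x \<in> A \<Longrightarrow> poly_function (f x)) \<Longrightarrow> poly_function (\<lambda>t. \<Sum>x\<in>A. f x t)"
  by (induction A rule: infinite_finite_induct) (simp_all add: poly_function_add)

lemma poly_function_prod:
  "(\<And>x. x \<in> A \<Longrightarrow> poly_function (f x)) \<Longrightarrow> poly_function (\<lambda>t. \<Prod>x\<in>A. f x t)"
  by (induction A rule: infinite_finite_induct) (simp_all add: poly_function_mult)

lemma poly_function_det:
  assumes "\<And>t. F t \<in> carrier_mat n n"
    and "\<And>i j. i < n \<Longrightarrow> j < n \<Longrightarrow> poly_function (\<lambda>t. F t $$ (i, j))"
  shows "poly_function (\<lambda>t. det (F t))"
proof -
  have "poly_function (\<lambda>t. signof p * (\<Prod>i = 0..<n. F t $$ (i, p i)))" if "p permutes {0..<n}" for p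
  proof -
    have "p i < n" if "i < n" for i
      using permutes_in_image[OF \<open>p permutes {0..<n}\<close>] that by simp
    then show ?thesis
      by (intro poly_function_mult poly_function_const poly_function_prod) (simp add: assms(2))
  qed
  then show ?thesis
    unfolding det_def'[OF assms(1)] by (intro poly_function_sum) simp
qed

lemma poly_function_finite_zeros:
  assumes "poly_function f" and "f t0 \<noteq> 0"
  shows "finite {t. f t = 0}"
proof -
  obtain p where p: "\<And>t. f t = poly p t"
    using assms(1) unfolding poly_function_def by blast
  with assms(2) have "p \<noteq> 0" by auto
  then show ?thesis using poly_roots_finite[of p] by (simp add: p)
qed

lemma poly_functions_common_nonzero:
  fixes f :: "'i \<Rightarrow> real \<Rightarrow> real"
  assumes "finite F" and "a < b"
    and "\<And>i. i \<in> F \<Longrightarrow> poly_function (f i)"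
    and "\<And>i. i \<in> F \<Longrightarrow> \<exists>t. f i t \<noteq> 0"
  shows "\<exists>t\<in>{a..b}. \<forall>i\<in>F. f i t \<noteq> 0"
proof -
  have "finite {t. f i t = 0}" if i: "i \<in> F" for i
  proof -
    obtain t0 where "f i t0 \<noteq> 0" using assms(4)[OF i] by blast
    then show ?thesis using poly_function_finite_zeros[OF assms(3)[OF i]] by blast
  qed
  then have "finite (\<Union>i\<in>F. {t. f i t = 0})"
    using \<open>finite F\<close> by (intro finite_UN_I)
  moreover have "infinite {a..b}" using \<open>a < b\<close> by simp
  ultimately obtain t where "t \<in> {a..b}" "t \<notin> (\<Union>i\<in>F. {t. f i t = 0})"
    by (meson finite_subset subsetI)
  then show ?thesis by blast
qed

lemma abs_convex_comb_attains_bound: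
  fixes w y :: "'a \<Rightarrow> real"
  assumes "finite A" and w_nonneg: "\<And>t. t \<in> A \<Longrightarrow> 0 \<le> w t" and "sum w A = 1"
    and y_le: "\<And>t. t \<in> A \<Longrightarrow> \<bar>y t\<bar> \<le> m" and attained: "m \<le> \<bar>\<Sum>t\<in>A. w t * y t\<bar>"
    and "t \<in> A" and "0 < w t"
  shows "\<bar>y t\<bar> = m"
proof -
  have nonneg: "0 \<le> w t * (m - \<bar>y t\<bar>)" if "t \<in> A" for t
    using w_nonneg[OF that] y_le[OF that] by (intro mult_nonneg_nonneg) simp_all
  have "\<bar>\<Sum>t\<in>A. w t * y t\<bar> \<le> (\<Sum>t\<in>A. \<bar>w t * y t\<bar>)"
    by (rule sum_abs)
  also have "\<dots> = (\<Sum>t\<in>A. w t * \<bar>y t\<bar>)"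
    by (intro sum.cong) (simp_all add: abs_mult w_nonneg)
  also have "\<dots> = sum w A * m - (\<Sum>t\<in>A. w t * (m - \<bar>y t\<bar>))"
    by (simp add: right_diff_distrib sum_subtractf sum_distrib_right)
  also have "\<dots> = m - (\<Sum>t\<in>A. w t * (m - \<bar>y t\<bar>))"
    by (simp add: \<open>sum w A = 1\<close>)
  finally have "(\<Sum>t\<in>A. w t * (m - \<bar>y t\<bar>)) \<le> 0"
    using attained by linarith
  moreover have "0 \<le> (\<Sum>t\<in>A. w t * (m - \<bar>y t\<bar>))"
    by (rule sum_nonneg) (rule nonneg)
  ultimately have "(\<Sum>t\<in>A. w t * (m - \<bar>y t\<bar>)) = 0" by linarith
  then have "w t * (m - \<bar>y t\<bar>) = 0"
    using sum_nonneg_0[where f = "\<lambda>t. w t * (m - \<bar>y t\<bar>)"] \<open>finite A\<close> nonneg \<open>t \<in> A\<close> by blast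
  with \<open>0 < w t\<close> show ?thesis by simp
qed

definition mix :: "('s \<Rightarrow> 's \<Rightarrow> real) \<Rightarrow> ('s \<Rightarrow> 's \<Rightarrow> real) \<Rightarrow> real \<Rightarrow> 's \<Rightarrow> 's \<Rightarrow> real" where
  "mix a b t s s' = (1 - t) * a s s' + t * b s s'"

lemma mix_0 [simp]: "mix a b 0 = a" and mix_1 [simp]: "mix a b 1 = b"
  by (simp_all add: mix_def fun_eq_iff)

lemma graph_preserving_mix:
  assumes a: "graph_preserving S E T a" and b: "graph_preserving S E T b" and "t \<in> {0..1}"
  shows "graph_preserving S E T (mix a b t)"
  unfolding graph_preserving_def
proof (intro ballI conjI)
  fix s assume s: "s \<in> S - T"
  then show "(\<Sum>s'\<in>succs E s. mix a b t s s') = 1"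
    using a b by (simp add: graph_preserving_def mix_def sum.distrib flip: sum_distrib_left)
  fix s' assume "s' \<in> succs E s"
  then have "0 < a s s'" "0 < b s s'" using a b s by (auto simp: graph_preserving_def)
  with \<open>t \<in> {0..1}\<close> show "0 < mix a b t s s'"
    unfolding mix_def by (cases "t = 1") (auto intro: add_pos_nonneg)
qed

locale target_chain =
  fixes S :: "'s set" and E :: "('s \<times> 's) set" and fin fail :: 's
  assumes finite_S: "finite S" and fin_in: "fin \<in> S"
    and edges: "E \<subseteq> (S - {fin, fail}) \<times> S"
begin

abbreviation graph_pres :: "('s \<Rightarrow> 's \<Rightarrow> real) \<Rightarrow> bool" where
  "graph_pres val \<equiv> graph_preserving S E {fin, fail} val"

abbreviation reach_n :: "('s \<Rightarrow> 's \<Rightarrow> real) \<Rightarrow> nat \<Rightarrow> 's \<Rightarrow> real" where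
  "reach_n val n s \<equiv> reach_within E {fin, fail} fin val n s"

abbreviation Reach :: "('s \<Rightarrow> 's \<Rightarrow> real) \<Rightarrow> 's \<Rightarrow> real" where
  "Reach val s \<equiv> reach_prob E {fin, fail} fin val s"

definition reaching_fin :: "'s set" where
  "reaching_fin = {s. s \<notin> {fin, fail} \<and> (s, fin) \<in> E\<^sup>*}"

definition trans_prob :: "('s \<Rightarrow> 's \<Rightarrow> real) \<Rightarrow> 's \<Rightarrow> 's \<Rightarrow> real" where
  "trans_prob val s t = (if (s, t) \<in> E then val s t else 0)"

lemma edgeD: "(s, t) \<in> E \<Longrightarrow> s \<in> S - {fin, fail} \<and> t \<in> S"
  using edges by auto

lemma succs_subset: "succs E s \<subseteq> S"
  using edges by (auto simp: succs_def)

lemma succs_eq_empty: "s \<notin> S - {fin, fail} \<Longrightarrow> succs E s = {}"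
  using edges by (auto simp: succs_def)

lemma graph_pres_pos: "graph_pres val \<Longrightarrow> (s, t) \<in> E \<Longrightarrow> 0 < val s t"
  using edgeD[of s t] unfolding graph_preserving_def succs_def by auto

lemma graph_pres_sum: "graph_pres val \<Longrightarrow> s \<in> S - {fin, fail} \<Longrightarrow> (\<Sum>t\<in>succs E s. val s t) = 1"
  unfolding graph_preserving_def by auto

lemma reaching_fin_subset: "reaching_fin \<subseteq> S - {fin, fail}"
proof
  fix s assume "s \<in> reaching_fin"
  then have "s \<notin> {fin, fail}" "(s, fin) \<in> E\<^sup>*" by (auto simp: reaching_fin_def)
  then obtain t where "(s, t) \<in> E" by (metis converse_rtranclE insertCI)
  then show "s \<in> S - {fin, fail}" using edgeD by blast
qed

lemma finite_reaching_fin: "finite reaching_fin"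
  using reaching_fin_subset finite_S finite_subset by blast

lemma fin_notin_reaching_fin: "fin \<notin> reaching_fin"
  by (simp add: reaching_fin_def)

lemma reach_n_bounds: "graph_pres val \<Longrightarrow> 0 \<le> reach_n val n s \<and> reach_n val n s \<le> 1"
proof (induction n arbitrary: s)
  case (Suc n)
  show ?case
  proof (cases "s \<in> S - {fin, fail}")
    case True
    have "(\<Sum>t\<in>succs E s. val s t * reach_n val n t) \<le> (\<Sum>t\<in>succs E s. val s t)"
      using Suc graph_pres_pos[OF Suc.prems]
      by (intro sum_mono) (auto simp: succs_def intro: mult_left_le less_imp_le)
    moreover have "0 \<le> (\<Sum>t\<in>succs E s. val s t * reach_n val n t)"
      using Suc graph_pres_pos[OF Suc.prems] by (intro sum_nonneg) (auto simp: succs_def less_imp_le)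
    ultimately show ?thesis using True graph_pres_sum[OF Suc.prems True] by simp
  qed (auto simp: succs_eq_empty)
qed simp

lemma reach_n_mono: "graph_pres val \<Longrightarrow> reach_n val n s \<le> reach_n val (Suc n) s"
proof (induction n arbitrary: s)
  case 0
  show ?case using reach_n_bounds[OF 0, of "Suc 0" s] by auto
next
  case (Suc n)
  have "(\<Sum>t\<in>succs E s. val s t * reach_n val n t) \<le> (\<Sum>t\<in>succs E s. val s t * reach_n val (Suc n) t)"
    using Suc graph_pres_pos[OF Suc.prems] by (intro sum_mono mult_left_mono) (auto simp: succs_def less_imp_le)
  then show ?case by simp
qed

lemma reach_n_tendsto_Reach: "graph_pres val \<Longrightarrow> (\<lambda>n. reach_n val n s) \<longlonglongrightarrow> Reach val s"
  unfolding reach_prob_def convergent_LIMSEQ_iff[symmetric]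
  by (intro Bseq_monoseq_convergent BseqI'[of _ 1] mono_SucI1)
     (use reach_n_bounds reach_n_mono in auto)

lemma Reach_fin:
  assumes "graph_pres val"
  shows "Reach val fin = 1"
proof -
  have "reach_n val n fin = 1" for n
    by (cases n) simp_all
  then have "(\<lambda>n. reach_n val n fin) = (\<lambda>n. 1)"
    by simp
  then show ?thesis
    using reach_n_tendsto_Reach[OF assms, of fin] by (simp add: LIMSEQ_const_iff)
qed

lemma Reach_eq_0:
  assumes "graph_pres val" and "s \<notin> reaching_fin" and "s \<noteq> fin"
  shows "Reach val s = 0"
proof -
  have "reach_n val n s = 0" if "s \<notin> reaching_fin" "s \<noteq> fin" for n s
    using that
  proof (induction n arbitrary: s)
    case (Suc n)
    have "reach_n val n t = 0" if "t \<in> succs E s" and "s \<notin> {fin, fail}" for t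
    proof (rule Suc.IH)
      have "(s, t) \<in> E" using that by (simp add: succs_def)
      moreover have "(s, fin) \<notin> E\<^sup>*" using Suc.prems that(2) by (simp add: reaching_fin_def)
      ultimately have "(t, fin) \<notin> E\<^sup>*" by (meson converse_rtrancl_into_rtrancl)
      then show "t \<notin> reaching_fin" "t \<noteq> fin" by (auto simp: reaching_fin_def)
    qed
    then show ?case using Suc.prems by auto
  qed simp
  then have "(\<lambda>n. reach_n val n s) = (\<lambda>n. 0)"
    using assms(2,3) by simp
  then show ?thesis
    using reach_n_tendsto_Reach[OF assms(1), of s] by (simp add: LIMSEQ_const_iff)
qed

lemma Reach_unfold:
  assumes "graph_pres val" and "s \<in> S - {fin, fail}"
  shows "Reach val s = (\<Sum>t\<in>succs E s. val s t * Reach val t)"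
proof -
  have "(\<lambda>n. reach_n val (Suc n) s) \<longlonglongrightarrow> Reach val s"
    using LIMSEQ_Suc[OF reach_n_tendsto_Reach[OF assms(1)]] .
  moreover have "(\<lambda>n. reach_n val (Suc n) s) \<longlonglongrightarrow> (\<Sum>t\<in>succs E s. val s t * Reach val t)"
    using assms(2) by (simp, intro tendsto_sum tendsto_mult tendsto_const reach_n_tendsto_Reach[OF assms(1)])
  ultimately show ?thesis using LIMSEQ_unique by blast
qed

lemma trans_prob_nonneg: "graph_pres val \<Longrightarrow> 0 \<le> trans_prob val s t"
  using graph_pres_pos[of val s t] by (cases "(s, t) \<in> E") (auto simp: trans_prob_def)

lemma sum_trans_prob_mult: "(\<Sum>t\<in>S. trans_prob val s t * f t) = (\<Sum>t\<in>succs E s. val s t * f t)"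
  by (rule sum.mono_neutral_cong_right[OF finite_S succs_subset])
     (auto simp: trans_prob_def succs_def)

lemma sum_trans_prob: "graph_pres val \<Longrightarrow> s \<in> S - {fin, fail} \<Longrightarrow> (\<Sum>t\<in>S. trans_prob val s t) = 1"
  using sum_trans_prob_mult[of val s "\<lambda>_. 1"] graph_pres_sum by simp

lemma Reach_reaching_fin:
  assumes "graph_pres val" and "s \<in> reaching_fin"
  shows "Reach val s = (\<Sum>t\<in>reaching_fin. trans_prob val s t * Reach val t) + trans_prob val s fin"
proof -
  have "Reach val s = (\<Sum>t\<in>S. trans_prob val s t * Reach val t)"
    using Reach_unfold[OF assms(1)] assms(2) reaching_fin_subset by (auto simp: sum_trans_prob_mult)
  also have "\<dots> = (\<Sum>t\<in>insert fin reaching_fin. trans_prob val s t * Reach val t)"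
    by (rule sum.mono_neutral_right[OF finite_S])
       (use reaching_fin_subset fin_in Reach_eq_0[OF assms(1)] in auto)
  also have "\<dots> = (\<Sum>t\<in>reaching_fin. trans_prob val s t * Reach val t) + trans_prob val s fin"
    using finite_reaching_fin fin_notin_reaching_fin Reach_fin[OF assms(1)] by simp
  finally show ?thesis .
qed

lemma harmonic_max_propagates:
  assumes val: "graph_pres val"
    and harmonic: "\<And>s. s \<in> reaching_fin \<Longrightarrow> x s = (\<Sum>t\<in>reaching_fin. trans_prob val s t * x t)"
    and bound: "\<And>s. s \<in> reaching_fin \<Longrightarrow> \<bar>x s\<bar> \<le> m" and "0 < m"
    and s: "s \<in> reaching_fin" "\<bar>x s\<bar> = m" and edge: "(s, t) \<in> E"
  shows "t \<in> reaching_fin \<and> \<bar>x t\<bar> = m"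
proof -
  define y where "y t = (if t \<in> reaching_fin then x t else 0)" for t
  have "s \<in> S - {fin, fail}" using s(1) reaching_fin_subset by blast
  have x_eq: "x s = (\<Sum>t\<in>S. trans_prob val s t * y t)"
    unfolding harmonic[OF s(1)]
    by (rule sum.mono_neutral_cong_left[OF finite_S]) (use reaching_fin_subset in \<open>auto simp: y_def\<close>)
  have "\<bar>y t\<bar> = m"
  proof (rule abs_convex_comb_attains_bound[OF finite_S trans_prob_nonneg[OF val]])
    show "sum (trans_prob val s) S = 1"
      using sum_trans_prob[OF val \<open>s \<in> S - {fin, fail}\<close>] .
    show "\<bar>y t'\<bar> \<le> m" for t'
      using bound \<open>0 < m\<close> by (simp add: y_def)
    show "m \<le> \<bar>\<Sum>t\<in>S. trans_prob val s t * y t\<bar>"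
      using s(2) x_eq by simp
    show "t \<in> S"
      using edgeD[OF edge] by blast
    show "0 < trans_prob val s t"
      using graph_pres_pos[OF val edge] edge by (simp add: trans_prob_def)
  qed
  then show ?thesis using \<open>0 < m\<close> by (simp add: y_def split: if_splits)
qed

text \<open>Maximum principle: the maximum of |x| on reaching_fin propagates along edges, so
  following a path from a maximiser to fin would put fin into reaching_fin.\<close>
lemma harmonic_on_reaching_fin_eq_0:
  assumes val: "graph_pres val"
    and harmonic: "\<And>s. s \<in> reaching_fin \<Longrightarrow> x s = (\<Sum>t\<in>reaching_fin. trans_prob val s t * x t)"
    and "s \<in> reaching_fin"
  shows "x s = 0"
proof (rule ccontr)
  assume "x s \<noteq> 0"
  define m where "m = Max ((\<lambda>s. \<bar>x s\<bar>) ` reaching_fin)"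
  have m_ge: "\<bar>x s'\<bar> \<le> m" if "s' \<in> reaching_fin" for s'
    using that finite_reaching_fin by (simp add: m_def)
  have "0 < m" using m_ge[OF \<open>s \<in> reaching_fin\<close>] \<open>x s \<noteq> 0\<close> by linarith
  have "m \<in> (\<lambda>s. \<bar>x s\<bar>) ` reaching_fin"
    unfolding m_def using finite_reaching_fin \<open>s \<in> reaching_fin\<close> by (intro Max_in) auto
  then obtain s_max where s_max: "s_max \<in> reaching_fin" "\<bar>x s_max\<bar> = m" by blast
  have max_reachable: "t \<in> reaching_fin \<and> \<bar>x t\<bar> = m" if "(s_max, t) \<in> E\<^sup>*" for t
    using that
  proof (induction rule: rtrancl_induct)
    case (step t' t'')
    then show ?case
      using harmonic_max_propagates[OF val harmonic m_ge \<open>0 < m\<close>, of t' t''] by blast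
  qed (use s_max in blast)
  have "(s_max, fin) \<in> E\<^sup>*" using s_max(1) by (simp add: reaching_fin_def)
  from max_reachable[OF this] show False using fin_notin_reaching_fin by simp
qed

context
  fixes q :: "nat \<Rightarrow> 's"
begin

definition sys_mat :: "('s \<Rightarrow> 's \<Rightarrow> real) \<Rightarrow> real mat" where
  "sys_mat val = mat (card reaching_fin) (card reaching_fin)
     (\<lambda>(i, j). (if i = j then 1 else 0) - trans_prob val (q i) (q j))"

definition sys_rhs :: "('s \<Rightarrow> 's \<Rightarrow> real) \<Rightarrow> real vec" where
  "sys_rhs val = vec (card reaching_fin) (\<lambda>i. trans_prob val (q i) fin)"

definition reach_vec :: "('s \<Rightarrow> 's \<Rightarrow> real) \<Rightarrow> real vec" where
  "reach_vec val = vec (card reaching_fin) (\<lambda>i. Reach val (q i))"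

lemma sys_mat_carrier: "sys_mat val \<in> carrier_mat (card reaching_fin) (card reaching_fin)"
  by (simp add: sys_mat_def)

lemma sys_mat_index:
  "i < card reaching_fin \<Longrightarrow> j < card reaching_fin \<Longrightarrow>
    sys_mat val $$ (i, j) = (if i = j then 1 else 0) - trans_prob val (q i) (q j)"
  by (simp add: sys_mat_def)

lemma sys_mat_mult_vec_index:
  assumes "i < card reaching_fin" and "w \<in> carrier_vec (card reaching_fin)"
  shows "(sys_mat val *\<^sub>v w) $ i = w $ i - (\<Sum>j = 0..<card reaching_fin. trans_prob val (q i) (q j) * w $ j)"
proof -
  have "(sys_mat val *\<^sub>v w) $ i
      = (\<Sum>j = 0..<card reaching_fin. (if i = j then w $ j else 0) - trans_prob val (q i) (q j) * w $ j)"
    using assms by (auto simp: sys_mat_def scalar_prod_def left_diff_distrib intro: sum.cong)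
  then show ?thesis using assms(1) by (simp add: sum_subtractf)
qed

lemma sum_reindex_q:
  assumes q: "bij_betw q {0..<card reaching_fin} reaching_fin"
  shows "(\<Sum>j = 0..<card reaching_fin. f (q j)) = (\<Sum>t\<in>reaching_fin. f t)"
  using sum.reindex_bij_betw[OF q] .

lemma sys_mat_reach_vec:
  assumes q: "bij_betw q {0..<card reaching_fin} reaching_fin" and "graph_pres val"
  shows "sys_mat val *\<^sub>v reach_vec val = sys_rhs val"
proof (rule eq_vecI)
  fix i assume "i < dim_vec (sys_rhs val)"
  then have i: "i < card reaching_fin" and "q i \<in> reaching_fin"
    using bij_betwE[OF q] by (auto simp: sys_rhs_def)
  then show "(sys_mat val *\<^sub>v reach_vec val) $ i = sys_rhs val $ i"
    using Reach_reaching_fin[OF \<open>graph_pres val\<close>] sys_mat_mult_vec_index[OF i]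
    by (simp add: reach_vec_def sys_rhs_def sum_reindex_q[OF q, where f = "\<lambda>t. trans_prob val (q i) t * Reach val t"])
qed (simp add: sys_mat_def sys_rhs_def)

lemma det_sys_mat_nonzero:
  assumes q: "bij_betw q {0..<card reaching_fin} reaching_fin" and val: "graph_pres val"
  shows "det (sys_mat val) \<noteq> 0"
proof
  assume "det (sys_mat val) = 0"
  then obtain v where v: "v \<in> carrier_vec (card reaching_fin)" "v \<noteq> 0\<^sub>v (card reaching_fin)"
    and kernel: "sys_mat val *\<^sub>v v = 0\<^sub>v (card reaching_fin)"
    using det_0_iff_vec_prod_zero[OF sys_mat_carrier] by blast
  define x where "x s = v $ inv_into {0..<card reaching_fin} q s" for s
  have x_q: "x (q j) = v $ j" if "j < card reaching_fin" for j
    using bij_betw_inv_into_left[OF q] that by (simp add: x_def)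
  have "x s = (\<Sum>t\<in>reaching_fin. trans_prob val s t * x t)" if s: "s \<in> reaching_fin" for s
  proof -
    define i where "i = inv_into {0..<card reaching_fin} q s"
    have i: "i < card reaching_fin" "q i = s"
      using bij_betwE[OF bij_betw_inv_into[OF q]] bij_betw_inv_into_right[OF q s] s
      by (auto simp: i_def)
    have "0 = (sys_mat val *\<^sub>v v) $ i" using kernel i by simp
    also have "\<dots> = v $ i - (\<Sum>j = 0..<card reaching_fin. trans_prob val (q i) (q j) * v $ j)"
      by (rule sys_mat_mult_vec_index[OF i(1) v(1)])
    also have "\<dots> = x s - (\<Sum>t\<in>reaching_fin. trans_prob val s t * x t)"
      unfolding sum_reindex_q[OF q, where f = "\<lambda>t. trans_prob val s t * x t", symmetric]
      using x_q[OF i(1)] by (simp add: x_q i)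
    finally show ?thesis by simp
  qed
  then have "x (q j) = 0" if "j < card reaching_fin" for j
    using harmonic_on_reaching_fin_eq_0[OF val] bij_betwE[OF q] that by auto
  then have "v = 0\<^sub>v (card reaching_fin)"
    using v(1) x_q by (intro eq_vecI) auto
  with v(2) show False by contradiction
qed

lemma cramer_Reach:
  assumes q: "bij_betw q {0..<card reaching_fin} reaching_fin" and "graph_pres val" and "k < card reaching_fin"
  shows "det (replace_col (sys_mat val) (sys_rhs val) k) = Reach val (q k) * det (sys_mat val)"
proof -
  have "det (replace_col (sys_mat val) (sys_mat val *\<^sub>v reach_vec val) k) = reach_vec val $ k * det (sys_mat val)"
    by (rule cramer_lemma_mat[OF sys_mat_carrier]) (simp_all add: reach_vec_def assms(3))
  then show ?thesis
    unfolding sys_mat_reach_vec[OF q assms(2)] using assms(3) by (simp add: reach_vec_def)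
qed

end

lemma poly_function_trans_prob:
  assumes "\<And>u v. (u, v) \<in> E \<Longrightarrow> poly_function (\<lambda>t. V t u v)"
  shows "poly_function (\<lambda>t. trans_prob (V t) u v)"
  using assms by (cases "(u, v) \<in> E") (simp_all add: trans_prob_def)

lemma Reach_rational_in_parameter:
  fixes V :: "real \<Rightarrow> 's \<Rightarrow> 's \<Rightarrow> real"
  assumes graph_pres: "\<And>t. t \<in> I \<Longrightarrow> graph_pres (V t)"
    and poly: "\<And>u v. (u, v) \<in> E \<Longrightarrow> poly_function (\<lambda>t. V t u v)"
  obtains D c where "poly_function D" and "\<And>s. poly_function (c s)"
    and "\<And>t. t \<in> I \<Longrightarrow> D t \<noteq> 0" and "\<And>t s. t \<in> I \<Longrightarrow> Reach (V t) s * D t = c s t"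
proof -
  obtain q where q: "bij_betw q {0..<card reaching_fin} reaching_fin"
    using ex_bij_betw_nat_finite[OF finite_reaching_fin] by blast
  let ?n = "card reaching_fin"
  define D where "D t = det (sys_mat q (V t))" for t
  define C where "C k t = det (replace_col (sys_mat q (V t)) (sys_rhs q (V t)) k)" for k t
  define c where "c s t = (if s \<in> reaching_fin then C (inv_into {0..<?n} q s) t
    else if s = fin then D t else 0)" for s t
  have entry: "poly_function (\<lambda>t. sys_mat q (V t) $$ (i, j))" if "i < ?n" "j < ?n" for i j
    unfolding sys_mat_index[OF that]
    by (rule poly_function_diff[OF poly_function_const poly_function_trans_prob[of V, OF poly]])
  have "poly_function D"
    unfolding D_def by (rule poly_function_det[OF sys_mat_carrier entry])
  moreover have "poly_function (C k)" for k
    unfolding C_def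
  proof (rule poly_function_det)
    show "replace_col (sys_mat q (V t)) (sys_rhs q (V t)) k \<in> carrier_mat ?n ?n" for t
      by (simp add: replace_col_def sys_mat_def)
    show "poly_function (\<lambda>t. replace_col (sys_mat q (V t)) (sys_rhs q (V t)) k $$ (i, j))"
      if "i < ?n" "j < ?n" for i j
    proof -
      have "replace_col (sys_mat q (V t)) (sys_rhs q (V t)) k $$ (i, j)
          = (if j = k then trans_prob (V t) (q i) fin else sys_mat q (V t) $$ (i, j))" for t
        using that by (simp add: replace_col_def sys_mat_def sys_rhs_def)
      then show ?thesis
        using entry[OF that] poly_function_trans_prob[of V, OF poly] by (cases "j = k") simp_all
    qed
  qed
  then have "poly_function (c s)" for s
    using \<open>poly_function D\<close>
    by (cases "s \<in> reaching_fin"; cases "s = fin") (simp_all add: c_def[abs_def])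
  moreover have "D t \<noteq> 0" if "t \<in> I" for t
    unfolding D_def using det_sys_mat_nonzero[OF q graph_pres[OF that]] .
  moreover have "Reach (V t) s * D t = c s t" if "t \<in> I" for t s
  proof (cases "s \<in> reaching_fin")
    case True
    define k where "k = inv_into {0..<?n} q s"
    have "k < ?n" "q k = s"
      using bij_betwE[OF bij_betw_inv_into[OF q]] bij_betw_inv_into_right[OF q True] True
      by (auto simp: k_def)
    then show ?thesis
      using cramer_Reach[OF q graph_pres[OF that]] True by (simp add: c_def C_def D_def k_def)
  next
    case False
    then show ?thesis
      using Reach_fin Reach_eq_0 graph_pres[OF that] by (simp add: c_def)
  qed
  ultimately show ?thesis using that by blast
qed

lemma mix_separates_simultaneously:
  assumes a: "graph_pres a" and b: "graph_pres b" and "finite F"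
    and separated: "\<And>u v. (u, v) \<in> F \<Longrightarrow> \<exists>t\<in>{0..1}. Reach (mix a b t) u \<noteq> Reach (mix a b t) v"
  shows "\<exists>t\<in>{0..1}. \<forall>(u, v)\<in>F. Reach (mix a b t) u \<noteq> Reach (mix a b t) v"
proof -
  have "\<And>u v. (u, v) \<in> E \<Longrightarrow> poly_function (\<lambda>t. mix a b t u v)"
    unfolding mix_def by (intro poly_function_add poly_function_mult poly_function_diff) simp_all
  then obtain D c where c: "\<And>s. poly_function (c s)" and D: "\<And>t. t \<in> {0..1} \<Longrightarrow> D t \<noteq> 0"
    and Reach_eq: "\<And>t s. t \<in> {0..1} \<Longrightarrow> Reach (mix a b t) s * D t = c s t"
    using Reach_rational_in_parameter[of "{0..1}" "mix a b"] graph_preserving_mix[OF a b] by metis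
  have "Reach (mix a b t) s = c s t / D t" if "t \<in> {0..1}" for t s
    using Reach_eq[OF that, of s] D[OF that] by (simp add: eq_divide_eq)
  then have separated_iff: "Reach (mix a b t) u \<noteq> Reach (mix a b t) v \<longleftrightarrow> c u t - c v t \<noteq> 0"
    if "t \<in> {0..1}" for t u v
    using D[OF that] that by simp
  have "\<exists>t\<in>{0..1::real}. \<forall>(u, v)\<in>F. c u t - c v t \<noteq> 0"
    using poly_functions_common_nonzero[OF \<open>finite F\<close>, of 0 1 "\<lambda>(u, v) t. c u t - c v t"]
      separated separated_iff c by (force intro: poly_function_diff)
  then show ?thesis using separated_iff by fast
qed

lemma exists_valuation_separating:
  assumes "\<exists>val. graph_pres val" and "finite F"
    and "\<And>u v. (u, v) \<in> F \<Longrightarrow> \<not> equiv_states S E fin fail u v"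
  shows "\<exists>val. graph_pres val \<and> (\<forall>(u, v)\<in>F. Reach val u \<noteq> Reach val v)"
  using \<open>finite F\<close> assms(3)
proof (induction F)
  case empty
  then show ?case using assms(1) by blast
next
  case (insert p F)
  obtain u v where p: "p = (u, v)" by fastforce
  obtain a where a: "graph_pres a" and sep_a: "\<forall>(u, v)\<in>F. Reach a u \<noteq> Reach a v"
    using insert by blast
  obtain b where b: "graph_pres b" and sep_b: "Reach b u \<noteq> Reach b v"
    using insert.prems[of u v] p unfolding equiv_states_def by blast
  have "\<exists>t\<in>{0..1}. Reach (mix a b t) u' \<noteq> Reach (mix a b t) v'" if "(u', v') \<in> insert p F" for u' v'
  proof (cases "(u', v') = p")
    case True
    then show ?thesis using sep_b p by (intro bexI[of _ 1]) auto
  next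
    case False
    then show ?thesis using sep_a that by (intro bexI[of _ 0]) auto
  qed
  then obtain t where "t \<in> {0..1}" "\<forall>(u', v')\<in>insert p F. Reach (mix a b t) u' \<noteq> Reach (mix a b t) v'"
    using mix_separates_simultaneously[OF a b finite.insertI[OF insert.hyps(1)]] by blast
  then show ?case using graph_preserving_mix[OF a b] by blast
qed

end

theorem lemma20:
  fixes S :: "'s set" and E :: "('s \<times> 's) set" and fin fail :: 's
  assumes finS: "finite S"
    and fin_in: "fin \<in> S" and fail_in: "fail \<in> S" and fin_ne_fail: "fin \<noteq> fail"
    and edges: "E \<subseteq> (S - {fin, fail}) \<times> S"
    and class_fin: "\<forall>u \<in> S. equiv_states S E fin fail u fin \<longrightarrow> u = fin"
    and class_fail: "\<forall>u \<in> S. equiv_states S E fin fail u fail \<longrightarrow> u = fail"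
    and no_self_loops: "\<forall>s. (s, s) \<notin> E"
    and two_succs: "\<forall>s \<in> S - {fin, fail}. card (succs E s) = 2"
  shows "\<exists>val. graph_preserving S E {fin, fail} val \<and>
           (\<forall>u \<in> S. \<forall>v \<in> S.
              reach_prob E {fin, fail} fin val u = reach_prob E {fin, fail} fin val v
              \<longleftrightarrow> equiv_states S E fin fail u v)"
proof -
  interpret target_chain S E fin fail
    using finS fin_in edges by unfold_locales
  have "graph_pres (\<lambda>_ _. 1 / 2)"
    unfolding graph_preserving_def
  proof (intro ballI conjI)
    fix s assume "s \<in> S - {fin, fail}"
    then show "(\<Sum>t\<in>succs E s. 1 / 2 :: real) = 1" using two_succs by simp
  qed simp
  moreover have "finite {(u, v) \<in> S \<times> S. \<not> equiv_states S E fin fail u v}"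
    using finS by (auto intro: finite_subset[of _ "S \<times> S"])
  ultimately obtain val where val: "graph_pres val"
    and separating: "\<forall>(u, v)\<in>{(u, v) \<in> S \<times> S. \<not> equiv_states S E fin fail u v}. Reach val u \<noteq> Reach val v"
    using exists_valuation_separating by blast
  have "Reach val u = Reach val v \<longleftrightarrow> equiv_states S E fin fail u v" if "u \<in> S" "v \<in> S" for u v
    using separating that val unfolding equiv_states_def by blast
  with val show ?thesis by blast
qed

end
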